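(* There exists a super-core of some non-shrinking function $f:\{0,1\}^n\to\{0,1\}^{m(n)}$ (i.e. $m(n)\ge n$ for all $n$) computable by polynomial-size circuits if and only if there exists a super-bit $g:\{0,1\}^n\to\{0,1\}^{n+1}$.
   Context: $U_k$ is uniform on $\{0,1\}^k$. A generator $g:\{0,1\}^n\to\{0,1\}^{n+1}$ computable by polynomial-size circuits is a super-bit if for every nondeterministic polynomial-size circuit family $D$ (accepting iff some witness gives output 1), every polynomial $p$ and all sufficiently large $n$, $\Pr[D(U_{n+1})=1]-\Pr[D(g(U_n))=1]<1/p(n)$. A predicate $b$ computable by polynomial-size circuits is a super-core of $f:\{0,1\}^n\to\{0,1\}^{m(n)}$ if there do not exist a nondeterministic polynomial-size circuit family $\mathcal{A}_1$, a co-nondeterministic polynomial-size circuit family $\mathcal{A}_2$ (rejecting iff some witness gives output 0), a polynomial $p$ and infinitely many $n$ such that either $\Pr_{x\in\{0,1\}^n}[\mathcal{A}_1(f(x),1^n)=b(x)=0]+\tfrac12\Pr_{y\in\{0,1\}^{m(n)}}[\mathcal{A}_1(y,1^n)=1]\ge \tfrac12+\tfrac1{p(n)}$ or $\Pr_{x}[\mathcal{A}_2(f(x),1^n)=b(x)=1]+\tfrac12\Pr_{y}[\mathcal{A}_2(y,1^n)=0]\ge \tfrac12+\tfrac1{p(n)}$. *)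

theory Defs
  imports Main "HOL-Computational_Algebra.Polynomial"
begin

text \<open>Bit strings are boolean lists. A circuit is a list of gates (each gate may read
an input bit or previously computed wires) plus a list of output wires.\<close>

datatype gate = Input nat | Const bool | NotG nat | AndG nat nat | OrG nat nat

record circuit =
  gates :: "gate list"
  outs :: "nat list"

definition wire :: "bool list \<Rightarrow> nat \<Rightarrow> bool" where
  "wire vs i = (if i < length vs then vs ! i else False)"

fun gate_val :: "bool list \<Rightarrow> bool list \<Rightarrow> gate \<Rightarrow> bool" where
  "gate_val x vs (Input i) = wire x i"
| "gate_val x vs (Const c) = c"
| "gate_val x vs (NotG i) = (\<not> wire vs i)"
| "gate_val x vs (AndG i j) = (wire vs i \<and> wire vs j)"
| "gate_val x vs (OrG i j) = (wire vs i \<or> wire vs j)"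

definition circ_eval :: "circuit \<Rightarrow> bool list \<Rightarrow> bool list" where
  "circ_eval C x =
     (let vs = foldl (\<lambda>vs g. vs @ [gate_val x vs g]) [] (gates C)
      in map (wire vs) (outs C))"

definition circ_size :: "circuit \<Rightarrow> nat" where
  "circ_size C = length (gates C) + length (outs C)"

text \<open>Polynomials used as bounds: real polynomials with positive leading coefficient
(so that they are eventually positive).\<close>

definition pos_poly :: "real poly \<Rightarrow> bool" where
  "pos_poly p \<longleftrightarrow> lead_coeff p > 0"

definition poly_size_family :: "(nat \<Rightarrow> circuit) \<Rightarrow> bool" where
  "poly_size_family C \<longleftrightarrow> (\<exists>p. \<forall>n. real (circ_size (C n)) \<le> poly p (real n))"

definition poly_computable :: "(bool list \<Rightarrow> bool list) \<Rightarrow> bool" where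
  "poly_computable f \<longleftrightarrow> (\<exists>C. poly_size_family C \<and>
      (\<forall>n x. length x = n \<longrightarrow> circ_eval (C n) x = f x))"

definition poly_computable_pred :: "(bool list \<Rightarrow> bool) \<Rightarrow> bool" where
  "poly_computable_pred b \<longleftrightarrow> poly_computable (\<lambda>x. [b x])"

text \<open>A (co-)nondeterministic circuit is a circuit together with a witness length l;
it is run on input y @ w for witnesses w of length l, and outputs 1 iff its output is [True].\<close>

definition out1 :: "circuit \<Rightarrow> bool list \<Rightarrow> bool" where
  "out1 C z \<longleftrightarrow> circ_eval C z = [True]"

definition nd_accepts :: "circuit \<times> nat \<Rightarrow> bool list \<Rightarrow> bool" where
  "nd_accepts D y \<longleftrightarrow> (\<exists>w. length w = snd D \<and> out1 (fst D) (y @ w))"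

definition cond_accepts :: "circuit \<times> nat \<Rightarrow> bool list \<Rightarrow> bool" where
  "cond_accepts D y \<longleftrightarrow> (\<forall>w. length w = snd D \<longrightarrow> out1 (fst D) (y @ w))"

definition poly_size_nd_family :: "(nat \<Rightarrow> circuit \<times> nat) \<Rightarrow> bool" where
  "poly_size_nd_family D \<longleftrightarrow>
     (\<exists>p. \<forall>n. real (circ_size (fst (D n)) + snd (D n)) \<le> poly p (real n))"

definition Pr :: "nat \<Rightarrow> (bool list \<Rightarrow> bool) \<Rightarrow> real" where
  "Pr k P = real (card {x. length x = k \<and> P x}) / 2 ^ k"

definition super_bit :: "(bool list \<Rightarrow> bool list) \<Rightarrow> bool" where
  "super_bit g \<longleftrightarrow>
     (\<forall>x. length (g x) = Suc (length x)) \<and> poly_computable g \<and>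
     (\<forall>D p. poly_size_nd_family D \<and> pos_poly p \<longrightarrow>
        (\<forall>\<^sub>F n in sequentially.
           Pr (Suc n) (\<lambda>y. nd_accepts (D n) y) - Pr n (\<lambda>x. nd_accepts (D n) (g x))
             < 1 / poly p (real n)))"

definition super_core ::
  "(bool list \<Rightarrow> bool) \<Rightarrow> (bool list \<Rightarrow> bool list) \<Rightarrow> (nat \<Rightarrow> nat) \<Rightarrow> bool" where
  "super_core b f m \<longleftrightarrow> poly_computable_pred b \<and>
     \<not> (\<exists>A1 A2 p. poly_size_nd_family A1 \<and> poly_size_nd_family A2 \<and> pos_poly p \<and>
          (\<exists>\<^sub>F n in sequentially.
             Pr n (\<lambda>x. \<not> nd_accepts (A1 n) (f x @ replicate n True) \<and> \<not> b x)
               + 1/2 * Pr (m n) (\<lambda>y. nd_accepts (A1 n) (y @ replicate n True))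
               \<ge> 1/2 + 1 / poly p (real n)
           \<or> Pr n (\<lambda>x. cond_accepts (A2 n) (f x @ replicate n True) \<and> b x)
               + 1/2 * Pr (m n) (\<lambda>y. \<not> cond_accepts (A2 n) (y @ replicate n True))
               \<ge> 1/2 + 1 / poly p (real n)))"

end

theory Submission
  imports Defs
begin

text \<open>Both directions rest on one counting identity. Write a string of length \<open>n + 1\<close> as \<open>y @ [c]\<close>
  and let \<open>g x = f x @ [b x]\<close>. For any test \<open>d\<close>, put \<open>a\<^sub>c y = d (y @ [c])\<close>; then the two
  super-core quantities of \<open>a\<^sub>0\<close> (against \<open>b = 0\<close>) and of \<open>a\<^sub>1\<close> (against \<open>b = 1\<close>) add up to
  \<open>1 + advantage g n d\<close>, where \<open>advantage g n d = Pr[d(U\<^bsub>n+1\<^esub>)] - Pr[d(g(U\<^bsub>n\<^esub>))]\<close>. Given a super-bit \<open>g\<close>, an attack \<open>a\<close> on the core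
  \<open>b = last \<circ> g\<close> of \<open>f = butlast \<circ> g\<close> is turned into the nondeterministic test
  \<open>d (y @ [c']) = (c' \<noteq> c \<or> a y)\<close>, whose other half contributes exactly \<open>1/2\<close>; so the gain of
  \<open>a\<close> beyond \<open>1/2\<close> equals the advantage of \<open>d\<close>. Conversely, given a super-core \<open>b\<close> of a
  non-shrinking \<open>f\<close>, the generator \<open>x \<mapsto> take n (f x) @ [b x]\<close> is a super-bit: a distinguisher
  \<open>d\<close> yields the attacks \<open>a\<^sub>0\<close> (nondeterministic) and \<open>\<not> a\<^sub>1\<close> (co-nondeterministic), one of which
  gains at least half the advantage.\<close>

section \<open>Circuit constructions\<close>

definition wires :: "gate list \<Rightarrow> bool list \<Rightarrow> bool list" where
  "wires gs x = foldl (\<lambda>vs g. vs @ [gate_val x vs g]) [] gs"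

lemma wires_append: "wires (gs @ hs) x = foldl (\<lambda>vs g. vs @ [gate_val x vs g]) (wires gs x) hs"
  by (simp add: wires_def)

lemma wires_Nil [simp]: "wires [] x = []"
  by (simp add: wires_def)

lemma wires_snoc [simp]: "wires (gs @ [g]) x = wires gs x @ [gate_val x (wires gs x) g]"
  by (simp add: wires_append)

lemma length_wires [simp]: "length (wires gs x) = length gs"
  by (induction gs rule: rev_induct) auto

lemma circ_eval_wires: "circ_eval C x = map (wire (wires (gates C) x)) (outs C)"
  by (simp add: circ_eval_def wires_def)

lemma wire_append: "wire (xs @ ys) i = (if i < length xs then wire xs i else wire ys (i - length xs))"
  by (auto simp: wire_def nth_append)

lemma out1_iff_wires: "out1 C z \<longleftrightarrow> (\<exists>q. outs C = [q] \<and> wire (wires (gates C) z) q)"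
  unfolding out1_def circ_eval_wires by (cases "outs C" rule: remdups_adj.cases) auto

lemma circ_eval_update_outs: "circ_eval (C\<lparr>outs := os\<rparr>) x = map (wire (wires (gates C) x)) os"
  by (simp add: circ_eval_wires)

definition copy_gate :: "bool \<Rightarrow> nat \<Rightarrow> gate" where
  "copy_gate neg i = (if neg then NotG i else AndG i i)"

lemma gate_val_copy_gate [simp]: "gate_val x vs (copy_gate neg i) = (neg \<noteq> wire vs i)"
  by (simp add: copy_gate_def)

definition output_gate :: "bool \<Rightarrow> circuit \<Rightarrow> gate" where
  "output_gate neg C = (case outs C of [q] \<Rightarrow> copy_gate neg q | _ \<Rightarrow> Const neg)"

lemma gate_val_output_gate [simp]:
  "gate_val x (wires (gates C) z) (output_gate neg C) = (neg \<noteq> out1 C z)"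
  unfolding out1_iff_wires output_gate_def
  by (cases "outs C" rule: remdups_adj.cases) auto

definition negate :: "circuit \<Rightarrow> circuit" where
  "negate C = \<lparr>gates = gates C @ [output_gate True C], outs = [length (gates C)]\<rparr>"

lemma out1_negate [simp]: "out1 (negate C) z = (\<not> out1 C z)"
  by (simp add: negate_def out1_def circ_eval_wires wire_def nth_append)

lemma circ_size_negate: "circ_size (negate C) \<le> circ_size C + 2"
  by (simp add: negate_def circ_size_def)

definition or_input :: "bool \<Rightarrow> nat \<Rightarrow> circuit \<Rightarrow> circuit" where
  "or_input neg j C = (let k = length (gates C) in
     \<lparr>gates = gates C @ [output_gate False C, Input j, copy_gate neg (k + 1), OrG k (k + 2)],
      outs = [k + 3]\<rparr>)"

lemma out1_or_input [simp]: "out1 (or_input neg j C) z = ((neg \<noteq> wire z j) \<or> out1 C z)"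
  by (auto simp: or_input_def Let_def out1_def circ_eval_wires wires_append wire_def nth_append
      simp del: wires_snoc)

lemma circ_size_or_input: "circ_size (or_input neg j C) \<le> circ_size C + 5"
  by (simp add: or_input_def Let_def circ_size_def)

fun rewire_gate :: "(nat \<Rightarrow> gate) \<Rightarrow> gate \<Rightarrow> gate" where
  "rewire_gate r (Input i) = r i"
| "rewire_gate r g = g"

definition rewire :: "(nat \<Rightarrow> gate) \<Rightarrow> circuit \<Rightarrow> circuit" where
  "rewire r C = C\<lparr>gates := map (rewire_gate r) (gates C)\<rparr>"

lemma wires_rewire:
  assumes "\<And>i vs. gate_val z vs (r i) = wire z' i"
  shows "wires (map (rewire_gate r) gs) z = wires gs z'"
proof (induction gs rule: rev_induct)
  case (snoc g gs)
  have "gate_val z vs (rewire_gate r g) = gate_val z' vs g" for vs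
    using assms by (cases g) auto
  with snoc show ?case by simp
qed simp

lemma out1_rewire:
  assumes "\<And>i vs. gate_val z vs (r i) = wire z' i"
  shows "out1 (rewire r C) z = out1 C z'"
  by (simp add: rewire_def out1_def circ_eval_wires wires_rewire[OF assms])

lemma circ_size_rewire [simp]: "circ_size (rewire r C) = circ_size C"
  by (simp add: rewire_def circ_size_def)

definition pad_wiring :: "nat \<Rightarrow> nat \<Rightarrow> gate" where
  "pad_wiring n i = (if i < n then Input i else if i < 2 * n then Const True else Input (i - n + 1))"

lemma gate_val_pad_wiring:
  "length y = n \<Longrightarrow> gate_val (y @ c # w) vs (pad_wiring n i) = wire (y @ replicate n True @ w) i"
  by (auto simp: pad_wiring_def wire_def nth_append)

definition prefix_wiring :: "nat \<Rightarrow> nat \<Rightarrow> bool \<Rightarrow> nat \<Rightarrow> gate" where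
  "prefix_wiring n M c i = (if i < n then Input i else if i = n then Const c else Input (i + M - 1))"

lemma gate_val_prefix_wiring:
  "length y = M \<Longrightarrow> n \<le> M \<Longrightarrow>
   gate_val (y @ replicate n True @ w) vs (prefix_wiring n M c i) = wire (take n y @ c # w) i"
  by (auto simp: prefix_wiring_def wire_def nth_append min_def)

fun shift_gate :: "nat \<Rightarrow> gate \<Rightarrow> gate" where
  "shift_gate k (NotG i) = NotG (i + k)"
| "shift_gate k (AndG i j) = AndG (i + k) (j + k)"
| "shift_gate k (OrG i j) = OrG (i + k) (j + k)"
| "shift_gate k g = g"

lemma wires_shift: "wires (gs @ map (shift_gate (length gs)) hs) x = wires gs x @ wires hs x"
proof (induction hs rule: rev_induct)
  case (snoc h hs)
  have "gate_val x (wires gs x @ vs) (shift_gate (length gs) h) = gate_val x vs h" for vs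
    by (cases h) (simp_all add: wire_append)
  with snoc show ?case
    by (simp del: append_assoc add: append_assoc[symmetric])
qed simp

text \<open>Output wires of the first circuit that point past its gates read \<open>False\<close>; they are
  redirected past all gates so that they keep doing so.\<close>

definition parallel :: "circuit \<Rightarrow> circuit \<Rightarrow> circuit" where
  "parallel C1 C2 = (let k = length (gates C1); k2 = length (gates C2) in
     \<lparr>gates = gates C1 @ map (shift_gate k) (gates C2),
      outs = map (\<lambda>q. if q < k then q else k + k2) (outs C1) @ map (\<lambda>q. q + k) (outs C2)\<rparr>)"

lemma circ_eval_parallel: "circ_eval (parallel C1 C2) x = circ_eval C1 x @ circ_eval C2 x"
  by (auto simp: parallel_def Let_def circ_eval_wires wires_shift wire_append wire_def nth_append)

lemma circ_size_parallel: "circ_size (parallel C1 C2) = circ_size C1 + circ_size C2"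
  by (simp add: parallel_def Let_def circ_size_def)

lemma nd_accepts_negate: "nd_accepts (apfst negate D) y \<longleftrightarrow> \<not> cond_accepts D y"
  by (simp add: nd_accepts_def cond_accepts_def)

lemma cond_accepts_negate: "cond_accepts (apfst negate D) y \<longleftrightarrow> \<not> nd_accepts D y"
  by (simp add: nd_accepts_def cond_accepts_def)

lemma nd_accepts_or_padded:
  assumes "length y = n"
  shows "nd_accepts (apfst (or_input c n \<circ> rewire (pad_wiring n)) D) (y @ [c'])
     \<longleftrightarrow> c' \<noteq> c \<or> nd_accepts D (y @ replicate n True)"
proof -
  have "out1 (or_input c n (rewire (pad_wiring n) C)) (y @ [c'] @ w)
        \<longleftrightarrow> c' \<noteq> c \<or> out1 C (y @ replicate n True @ w)" for C w
    using assms by (auto simp: out1_rewire[OF gate_val_pad_wiring[OF assms]] wire_def nth_append)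
  moreover have "\<exists>w :: bool list. length w = snd D"
    by (rule exI[of _ "replicate (snd D) False"]) simp
  ultimately show ?thesis
    unfolding nd_accepts_def by auto
qed

lemma nd_accepts_rewire_prefix:
  assumes "length y = M" and "n \<le> M"
  shows "nd_accepts (apfst (rewire (prefix_wiring n M c)) D) (y @ replicate n True)
     \<longleftrightarrow> nd_accepts D (take n y @ [c])"
  by (simp add: nd_accepts_def out1_rewire[OF gate_val_prefix_wiring[OF assms]])

section \<open>Uniform probabilities on bit strings\<close>

definition bitstrings :: "nat \<Rightarrow> bool list set" where
  "bitstrings k = {x. length x = k}"

lemma finite_bitstrings [simp]: "finite (bitstrings k)"
  using finite_lists_length_eq[of "UNIV :: bool set" k] by (simp add: bitstrings_def)

lemma card_bitstrings: "card (bitstrings k) = 2 ^ k"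
  using card_lists_length_eq[of "UNIV :: bool set" k] by (simp add: bitstrings_def card_UNIV_bool)

lemma Pr_eq_sum: "Pr k P = (\<Sum>x\<in>bitstrings k. of_bool (P x)) / 2 ^ k"
proof -
  have "(\<Sum>x\<in>bitstrings k. of_bool (P x) :: real) = real (card {x\<in>bitstrings k. P x})"
    by (simp add: Collect_conj_eq)
  then show ?thesis
    by (simp add: Pr_def bitstrings_def)
qed

lemma Pr_cong: "(\<And>x. length x = k \<Longrightarrow> P x = Q x) \<Longrightarrow> Pr k P = Pr k Q"
  unfolding Pr_def by (metis (mono_tags, lifting) Collect_cong)

lemma Pr_True [simp]: "Pr k (\<lambda>_. True) = 1"
  by (simp add: Pr_def card_bitstrings[unfolded bitstrings_def])

lemma Pr_False [simp]: "Pr k (\<lambda>_. False) = 0"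
  by (simp add: Pr_def)

lemma Pr_split: "Pr k P = Pr k (\<lambda>x. P x \<and> Q x) + Pr k (\<lambda>x. P x \<and> \<not> Q x)"
proof -
  have "(\<Sum>x\<in>bitstrings k. of_bool (P x) :: real) =
        (\<Sum>x\<in>bitstrings k. of_bool (P x \<and> Q x) + of_bool (P x \<and> \<not> Q x))"
    by (rule sum.cong) auto
  then show ?thesis
    unfolding Pr_eq_sum by (simp add: sum.distrib add_divide_distrib)
qed

lemma Pr_not: "Pr k (\<lambda>x. \<not> P x) = 1 - Pr k P"
  using Pr_split[of k "\<lambda>_. True" P] by simp

lemma sum_bitstrings_add:
  "(\<Sum>z\<in>bitstrings (n + k). F z) = (\<Sum>a\<in>bitstrings n. \<Sum>b\<in>bitstrings k. F (a @ b))"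
proof -
  have "bitstrings (n + k) = (\<lambda>(a, b). a @ b) ` (bitstrings n \<times> bitstrings k)"
  proof (intro equalityI subsetI)
    fix z assume "z \<in> bitstrings (n + k)"
    then have "(take n z, drop n z) \<in> bitstrings n \<times> bitstrings k"
      by (simp add: bitstrings_def)
    then show "z \<in> (\<lambda>(a, b). a @ b) ` (bitstrings n \<times> bitstrings k)"
      by (metis (no_types, lifting) append_take_drop_id case_prod_conv image_eqI)
  qed (auto simp: bitstrings_def)
  moreover have "inj_on (\<lambda>(a, b). a @ b) (bitstrings n \<times> bitstrings k)"
    by (auto simp: inj_on_def bitstrings_def)
  ultimately show ?thesis
    by (simp add: sum.reindex sum.cartesian_product split_def)
qed

lemma Pr_append: "Pr (n + k) P = (\<Sum>b\<in>bitstrings k. Pr n (\<lambda>a. P (a @ b))) / 2 ^ k"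
proof -
  have "(\<Sum>z\<in>bitstrings (n + k). of_bool (P z) :: real)
        = (\<Sum>b\<in>bitstrings k. \<Sum>a\<in>bitstrings n. of_bool (P (a @ b)))"
    by (simp only: sum_bitstrings_add sum.swap[of _ "bitstrings n"])
  also have "\<dots> = (\<Sum>b\<in>bitstrings k. 2 ^ n * Pr n (\<lambda>a. P (a @ b)))"
    by (simp only: Pr_eq_sum) simp
  finally show ?thesis
    by (simp add: Pr_eq_sum[of "n + k"] power_add sum_distrib_left[symmetric])
qed

lemma Pr_Suc: "Pr (Suc n) P = (Pr n (\<lambda>y. P (y @ [c])) + Pr n (\<lambda>y. P (y @ [\<not> c]))) / 2"
proof -
  have "bitstrings 1 = {[False], [True]}"
    by (auto simp: bitstrings_def length_Suc_conv)
  then show ?thesis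
    using Pr_append[of n 1 P] by (cases c) auto
qed

lemma Pr_take: assumes "n \<le> M" shows "Pr M (\<lambda>y. Q (take n y)) = Pr n Q"
proof -
  obtain k where M: "M = n + k"
    using assms le_Suc_ex by blast
  have "Pr n (\<lambda>a. Q (take n (a @ b))) = Pr n Q" for b
    by (rule Pr_cong) simp
  then show ?thesis
    by (simp add: M Pr_append card_bitstrings)
qed

section \<open>Polynomial-size families\<close>

lemma poly_size_family_bounded:
  assumes "poly_size_family C" and "\<And>n. circ_size (E n) \<le> circ_size (C n) + k"
  shows "poly_size_family E"
proof -
  obtain p where p: "\<And>n. real (circ_size (C n)) \<le> poly p (real n)"
    using assms(1) unfolding poly_size_family_def by blast
  have "real (circ_size (E n)) \<le> poly (p + [:real k:]) (real n)" for n
  proof -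
    have "real (circ_size (E n)) \<le> real (circ_size (C n)) + real k"
      using assms(2)[of n] by (metis of_nat_add of_nat_le_iff)
    with p[of n] show ?thesis by simp
  qed
  then show ?thesis
    unfolding poly_size_family_def by blast
qed

lemma poly_size_family_parallel:
  assumes "poly_size_family C1" and "poly_size_family C2"
  shows "poly_size_family (\<lambda>n. parallel (C1 n) (C2 n))"
proof -
  obtain p1 p2 where "\<And>n. real (circ_size (C1 n)) \<le> poly p1 (real n)"
    and "\<And>n. real (circ_size (C2 n)) \<le> poly p2 (real n)"
    using assms unfolding poly_size_family_def by blast
  then have "real (circ_size (parallel (C1 n) (C2 n))) \<le> poly (p1 + p2) (real n)" for n
    by (simp add: circ_size_parallel add_mono)
  then show ?thesis
    unfolding poly_size_family_def by blast
qed

lemma poly_size_nd_family_apfst: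
  assumes "poly_size_nd_family D" and "\<And>n C. circ_size (h n C) \<le> circ_size C + k"
  shows "poly_size_nd_family (\<lambda>n. apfst (h n) (D n))"
proof -
  obtain p where p: "\<And>n. real (circ_size (fst (D n)) + snd (D n)) \<le> poly p (real n)"
    using assms(1) unfolding poly_size_nd_family_def by blast
  have "real (circ_size (h n (fst (D n))) + snd (D n)) \<le> poly (p + [:real k:]) (real n)" for n
  proof -
    have "real (circ_size (h n (fst (D n)))) \<le> real (circ_size (fst (D n))) + real k"
      using assms(2)[of n "fst (D n)"] by (metis of_nat_add of_nat_le_iff)
    with p[of n] show ?thesis by simp
  qed
  then show ?thesis
    unfolding poly_size_nd_family_def fst_apfst snd_apfst by blast
qed

lemma poly_computable_butlast:
  assumes "poly_computable g"
  shows "poly_computable (\<lambda>x. butlast (g x))"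
proof -
  obtain C where C: "poly_size_family C" "\<And>n x. length x = n \<Longrightarrow> circ_eval (C n) x = g x"
    using assms unfolding poly_computable_def by blast
  have "poly_size_family (\<lambda>n. C n\<lparr>outs := butlast (outs (C n))\<rparr>)"
    by (rule poly_size_family_bounded[OF C(1), where k = 0]) (simp add: circ_size_def)
  moreover have "circ_eval (C n\<lparr>outs := butlast (outs (C n))\<rparr>) x = butlast (g x)" if "length x = n" for n x
    using C(2)[OF that] by (simp add: circ_eval_update_outs circ_eval_wires map_butlast)
  ultimately show ?thesis
    unfolding poly_computable_def by blast
qed

lemma poly_computable_pred_last:
  assumes "poly_computable g" and "\<And>x. g x \<noteq> []"
  shows "poly_computable_pred (\<lambda>x. last (g x))"
proof -
  obtain C where C: "poly_size_family C" "\<And>n x. length x = n \<Longrightarrow> circ_eval (C n) x = g x"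
    using assms(1) unfolding poly_computable_def by blast
  have "poly_size_family (\<lambda>n. C n\<lparr>outs := [last (outs (C n))]\<rparr>)"
    by (rule poly_size_family_bounded[OF C(1), where k = 1]) (simp add: circ_size_def)
  moreover have "circ_eval (C n\<lparr>outs := [last (outs (C n))]\<rparr>) x = [last (g x)]" if "length x = n" for n x
  proof -
    have "map (wire (wires (gates (C n)) x)) (outs (C n)) = g x"
      using C(2)[OF that] by (simp add: circ_eval_wires)
    with assms(2)[of x] show ?thesis
      by (metis circ_eval_update_outs last_map list.simps(8,9))
  qed
  ultimately show ?thesis
    unfolding poly_computable_pred_def poly_computable_def by blast
qed

lemma poly_computable_take_length:
  assumes "poly_computable f"
  shows "poly_computable (\<lambda>x. take (length x) (f x))"
proof -
  obtain C where C: "poly_size_family C" "\<And>n x. length x = n \<Longrightarrow> circ_eval (C n) x = f x"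
    using assms unfolding poly_computable_def by blast
  have "poly_size_family (\<lambda>n. C n\<lparr>outs := take n (outs (C n))\<rparr>)"
    by (rule poly_size_family_bounded[OF C(1), where k = 0]) (simp add: circ_size_def)
  moreover have "circ_eval (C n\<lparr>outs := take n (outs (C n))\<rparr>) x = take (length x) (f x)"
    if "length x = n" for n x
    using C(2)[OF that, symmetric] that by (simp add: circ_eval_update_outs circ_eval_wires take_map)
  ultimately show ?thesis
    unfolding poly_computable_def by blast
qed

lemma poly_computable_append:
  assumes "poly_computable f" and "poly_computable g"
  shows "poly_computable (\<lambda>x. f x @ g x)"
proof -
  obtain Cf Cg where "poly_size_family Cf" "\<And>n x. length x = n \<Longrightarrow> circ_eval (Cf n) x = f x"
    and "poly_size_family Cg" "\<And>n x. length x = n \<Longrightarrow> circ_eval (Cg n) x = g x"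
    using assms unfolding poly_computable_def by metis
  then show ?thesis
    unfolding poly_computable_def
    by (intro exI[of _ "\<lambda>n. parallel (Cf n) (Cg n)"]) (simp add: poly_size_family_parallel circ_eval_parallel)
qed

section \<open>Super-cores versus super-bits\<close>

text \<open>The two quantities in the definition of a super-core are \<open>core_gain f b n (m n) False a\<close>
  for the acceptance predicate \<open>a\<close> of \<open>\<A>\<^sub>1\<close> and \<open>core_gain f b n (m n) True a\<close> for the
  rejection predicate \<open>a\<close> of \<open>\<A>\<^sub>2\<close>.\<close>

definition core_gain ::
  "(bool list \<Rightarrow> bool list) \<Rightarrow> (bool list \<Rightarrow> bool) \<Rightarrow> nat \<Rightarrow> nat \<Rightarrow> bool \<Rightarrow> (bool list \<Rightarrow> bool) \<Rightarrow> real"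
where
  "core_gain f b n M c a = Pr n (\<lambda>x. \<not> a (f x) \<and> b x = c) + 1/2 * Pr M a"

lemma core_gain_cong:
  assumes "\<And>y. length y = M \<Longrightarrow> a y = a' y" and "\<And>x. length x = n \<Longrightarrow> length (f x) = M"
  shows "core_gain f b n M c a = core_gain f b n M c a'"
  unfolding core_gain_def using assms by (metis (no_types, lifting) Pr_cong)

lemma core_gain_const_True [simp]: "core_gain f b n M c (\<lambda>_. True) = 1/2"
  by (simp add: core_gain_def)

lemma core_gain_take:
  assumes "n \<le> M"
  shows "core_gain f b n M c (\<lambda>y. a (take n y)) = core_gain (\<lambda>x. take n (f x)) b n n c a"
  by (simp add: core_gain_def Pr_take[OF assms])

definition advantage :: "(bool list \<Rightarrow> bool list) \<Rightarrow> nat \<Rightarrow> (bool list \<Rightarrow> bool) \<Rightarrow> real" where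
  "advantage g n d = Pr (Suc n) d - Pr n (\<lambda>x. d (g x))"

lemma core_gain_sum_eq_advantage:
  assumes "\<And>x. length x = n \<Longrightarrow> g x = t x @ [b x]"
  shows "core_gain t b n n c (\<lambda>y. d (y @ [c])) + core_gain t b n n (\<not> c) (\<lambda>y. d (y @ [\<not> c]))
         = 1 + advantage g n d"
proof -
  have "Pr n (\<lambda>x. d (g x)) = Pr n (\<lambda>x. d (t x @ [b x]))"
    by (rule Pr_cong) (simp add: assms)
  also have "\<dots> = Pr n (\<lambda>x. d (t x @ [b x]) \<and> b x = c) + Pr n (\<lambda>x. d (t x @ [b x]) \<and> b x \<noteq> c)"
    by (rule Pr_split)
  also have "Pr n (\<lambda>x. d (t x @ [b x]) \<and> b x = c) = Pr n (\<lambda>x. b x = c \<and> d (t x @ [c]))"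
    by (rule Pr_cong) auto
  also have "Pr n (\<lambda>x. d (t x @ [b x]) \<and> b x \<noteq> c) = Pr n (\<lambda>x. b x = (\<not> c) \<and> d (t x @ [\<not> c]))"
    by (rule Pr_cong) auto
  finally have split_g: "Pr n (\<lambda>x. d (g x))
      = Pr n (\<lambda>x. b x = c \<and> d (t x @ [c])) + Pr n (\<lambda>x. b x = (\<not> c) \<and> d (t x @ [\<not> c]))" .
  have "Pr n (\<lambda>x. b x = (\<not> c)) = Pr n (\<lambda>x. \<not> b x = c)"
    by (rule Pr_cong) auto
  then have split_b: "Pr n (\<lambda>x. b x = c) + Pr n (\<lambda>x. b x = (\<not> c)) = 1"
    using Pr_not[of n "\<lambda>x. b x = c"] by simp
  have split_e: "Pr n (\<lambda>x. b x = e)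
      = Pr n (\<lambda>x. b x = e \<and> d (t x @ [e])) + Pr n (\<lambda>x. \<not> d (t x @ [e]) \<and> b x = e)" for e
  proof -
    have "Pr n (\<lambda>x. \<not> d (t x @ [e]) \<and> b x = e) = Pr n (\<lambda>x. b x = e \<and> \<not> d (t x @ [e]))"
      by (rule Pr_cong) auto
    then show ?thesis
      using Pr_split[of n "\<lambda>x. b x = e" "\<lambda>x. d (t x @ [e])"] by linarith
  qed
  show ?thesis
    unfolding core_gain_def advantage_def Pr_Suc[of n d c]
    using split_g split_b split_e[of c] split_e[of "\<not> c"] by argo
qed

lemma super_bit_iff:
  "super_bit g \<longleftrightarrow> (\<forall>x. length (g x) = Suc (length x)) \<and> poly_computable g \<and>
     (\<forall>D p. poly_size_nd_family D \<and> pos_poly p \<longrightarrow>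
        (\<forall>\<^sub>F n in sequentially. advantage g n (nd_accepts (D n)) < 1 / poly p (real n)))"
  by (simp add: super_bit_def advantage_def)

text \<open>A co-nondeterministic \<open>\<A>\<^sub>2\<close> rejects exactly where its negation, run nondeterministically,
  accepts; so both halves of the super-core condition are attacks by one nondeterministic family.\<close>

lemma super_core_iff:
  "super_core b f m \<longleftrightarrow> poly_computable_pred b \<and>
     \<not> (\<exists>E p c. poly_size_nd_family E \<and> pos_poly p \<and>
          (\<exists>\<^sub>F n in sequentially.
             core_gain f b n (m n) c (\<lambda>y. nd_accepts (E n) (y @ replicate n True))
               \<ge> 1/2 + 1 / poly p (real n)))"
  (is "_ \<longleftrightarrow> _ \<and> \<not> (\<exists>E p c. poly_size_nd_family E \<and> pos_poly p \<and> ?gain E p c)")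
proof -
  have gain_False: "core_gain f b n M False a = Pr n (\<lambda>x. \<not> a (f x) \<and> \<not> b x) + 1/2 * Pr M a"
    for n M a by (simp add: core_gain_def)
  have gain_True: "core_gain f b n M True (\<lambda>y. \<not> a y) = Pr n (\<lambda>x. a (f x) \<and> b x) + 1/2 * Pr M (\<lambda>y. \<not> a y)"
    for n M a by (simp add: core_gain_def)
  have negate_family: "poly_size_nd_family (\<lambda>n. apfst negate (E n))" if "poly_size_nd_family E" for E
    using poly_size_nd_family_apfst[OF that circ_size_negate] .
  let ?attack = "\<exists>A1 A2 p. poly_size_nd_family A1 \<and> poly_size_nd_family A2 \<and> pos_poly p \<and>
    (?gain A1 p False \<or> (\<exists>\<^sub>F n in sequentially.
       core_gain f b n (m n) True (\<lambda>y. \<not> cond_accepts (A2 n) (y @ replicate n True))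
         \<ge> 1/2 + 1 / poly p (real n)))"
  have "?attack \<longleftrightarrow> (\<exists>E p c. poly_size_nd_family E \<and> pos_poly p \<and> ?gain E p c)"
  proof
    assume ?attack
    then obtain A1 A2 p where "poly_size_nd_family A1" "poly_size_nd_family A2" "pos_poly p"
      and "?gain A1 p False \<or> ?gain (\<lambda>n. apfst negate (A2 n)) p True"
      unfolding nd_accepts_negate by blast
    then show "\<exists>E p c. poly_size_nd_family E \<and> pos_poly p \<and> ?gain E p c"
      using negate_family by blast
  next
    assume "\<exists>E p c. poly_size_nd_family E \<and> pos_poly p \<and> ?gain E p c"
    then obtain E p c where E: "poly_size_nd_family E" "pos_poly p" and gain: "?gain E p c"
      by blast
    show ?attack
    proof (cases c)
      case True
      with gain have "?gain E p True" by simp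
      with E negate_family[OF E(1)] show ?thesis
        by (intro exI[of _ E] exI[of _ "\<lambda>n. apfst negate (E n)"] exI[of _ p])
          (simp add: cond_accepts_negate)
    next
      case False
      with gain have "?gain E p False" by simp
      with E show ?thesis by blast
    qed
  qed
  moreover have "super_core b f m \<longleftrightarrow> poly_computable_pred b \<and> \<not> ?attack"
    by (simp only: super_core_def gain_False gain_True frequently_disj_iff)
  ultimately show ?thesis
    by simp
qed

lemma core_gain_eq_advantage_or_padded:
  assumes "\<And>x. length x = n \<Longrightarrow> g x = f x @ [b x]" and "\<And>x. length x = n \<Longrightarrow> length (f x) = n"
  shows "core_gain f b n n c (\<lambda>y. nd_accepts E (y @ replicate n True))
    = 1/2 + advantage g n (nd_accepts (apfst (or_input c n \<circ> rewire (pad_wiring n)) E))"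
    (is "_ = 1/2 + advantage g n (nd_accepts ?D)")
proof -
  have accepts: "nd_accepts ?D (y @ [c']) \<longleftrightarrow> c' \<noteq> c \<or> nd_accepts E (y @ replicate n True)"
    if "length y = n" for y c'
    using nd_accepts_or_padded[OF that] .
  have "core_gain f b n n c (\<lambda>y. nd_accepts ?D (y @ [c]))
      = core_gain f b n n c (\<lambda>y. nd_accepts E (y @ replicate n True))"
    by (rule core_gain_cong) (simp_all add: accepts assms(2))
  moreover have "core_gain f b n n (\<not> c) (\<lambda>y. nd_accepts ?D (y @ [\<not> c]))
      = core_gain f b n n (\<not> c) (\<lambda>_. True)"
    by (rule core_gain_cong) (simp_all add: accepts assms(2))
  ultimately show ?thesis
    using core_gain_sum_eq_advantage[of n g f b c "nd_accepts ?D", OF assms(1)] by simp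
qed

lemma core_gain_sum_eq_advantage_prefix:
  assumes "\<And>x. length x = n \<Longrightarrow> g x = take n (f x) @ [b x]"
    and "\<And>x. length x = n \<Longrightarrow> length (f x) = M" and "n \<le> M"
  shows "core_gain f b n M False (\<lambda>y. nd_accepts (apfst (rewire (prefix_wiring n M False)) D) (y @ replicate n True))
    + core_gain f b n M True (\<lambda>y. nd_accepts (apfst (rewire (prefix_wiring n M True)) D) (y @ replicate n True))
    = 1 + advantage g n (nd_accepts D)"
proof -
  have "core_gain f b n M c (\<lambda>y. nd_accepts (apfst (rewire (prefix_wiring n M c)) D) (y @ replicate n True))
      = core_gain (\<lambda>x. take n (f x)) b n n c (\<lambda>y. nd_accepts D (y @ [c]))" for c
  proof -
    have "core_gain f b n M c (\<lambda>y. nd_accepts (apfst (rewire (prefix_wiring n M c)) D) (y @ replicate n True))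
        = core_gain f b n M c (\<lambda>y. nd_accepts D (take n y @ [c]))"
      by (rule core_gain_cong) (simp_all add: nd_accepts_rewire_prefix \<open>n \<le> M\<close> assms(2))
    then show ?thesis
      using core_gain_take[OF \<open>n \<le> M\<close>] by simp
  qed
  then show ?thesis
    using core_gain_sum_eq_advantage[of n g "\<lambda>x. take n (f x)" b False, OF assms(1)] by simp
qed

lemma frequently_le_half_sum:
  fixes t u v :: "'a \<Rightarrow> real"
  assumes "\<exists>\<^sub>F n in F. 2 * t n \<le> u n + v n"
  shows "(\<exists>\<^sub>F n in F. t n \<le> u n) \<or> (\<exists>\<^sub>F n in F. t n \<le> v n)"
  unfolding frequently_disj_iff[symmetric] using assms by (rule frequently_elim1) linarith

lemma super_core_of_super_bit:
  assumes "super_bit g"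
  shows "super_core (\<lambda>x. last (g x)) (\<lambda>x. butlast (g x)) (\<lambda>n. n)"
proof -
  define f b where "f x = butlast (g x)" and "b x = last (g x)" for x
  have len_g: "\<And>x. length (g x) = Suc (length x)" and "poly_computable g"
    and secure: "\<And>D p. poly_size_nd_family D \<Longrightarrow> pos_poly p \<Longrightarrow>
       \<forall>\<^sub>F n in sequentially. advantage g n (nd_accepts (D n)) < 1 / poly p (real n)"
    using assms unfolding super_bit_iff by auto
  have g_nonempty: "g x \<noteq> []" for x
    using len_g[of x] by auto
  then have g_eq: "g x = f x @ [b x]" for x
    unfolding f_def b_def by simp
  have len_f: "length (f x) = length x" for x
    using len_g[of x] by (simp add: f_def)
  have "poly_computable_pred b"
    unfolding b_def using \<open>poly_computable g\<close> g_nonempty by (rule poly_computable_pred_last)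
  moreover have "\<not> (\<exists>\<^sub>F n in sequentially.
      core_gain f b n n c (\<lambda>y. nd_accepts (E n) (y @ replicate n True)) \<ge> 1/2 + 1 / poly p (real n))"
    if "poly_size_nd_family E" and "pos_poly p" for E p c
  proof -
    define D where "D n = apfst (or_input c n \<circ> rewire (pad_wiring n)) (E n)" for n
    have "poly_size_nd_family D"
      unfolding D_def comp_def
      by (rule poly_size_nd_family_apfst[OF \<open>poly_size_nd_family E\<close>, where k = 5])
        (metis circ_size_or_input circ_size_rewire)
    then have "\<forall>\<^sub>F n in sequentially. advantage g n (nd_accepts (D n)) < 1 / poly p (real n)"
      using \<open>pos_poly p\<close> by (rule secure)
    then show ?thesis
      unfolding not_frequently D_def
      by (rule eventually_mono) (simp add: core_gain_eq_advantage_or_padded[where g = g] g_eq len_f)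
  qed
  ultimately have "super_core b f (\<lambda>n. n)"
    unfolding super_core_iff by blast
  then show ?thesis
    by (simp add: f_def[abs_def] b_def[abs_def])
qed

lemma super_bit_of_super_core:
  assumes len_f: "\<And>x. length (f x) = m (length x)" and "\<And>n. n \<le> m n"
    and "poly_computable f" and "super_core b f m"
  shows "super_bit (\<lambda>x. take (length x) (f x) @ [b x])" (is "super_bit ?g")
proof -
  have "poly_computable_pred b"
    and secure: "\<And>E p c. poly_size_nd_family E \<Longrightarrow> pos_poly p \<Longrightarrow>
       \<not> (\<exists>\<^sub>F n in sequentially.
          core_gain f b n (m n) c (\<lambda>y. nd_accepts (E n) (y @ replicate n True)) \<ge> 1/2 + 1 / poly p (real n))"
    using \<open>super_core b f m\<close> unfolding super_core_iff by auto
  have "length (?g x) = Suc (length x)" for x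
    using len_f[of x] \<open>length x \<le> m (length x)\<close> by simp
  moreover have "poly_computable ?g"
    using poly_computable_append[OF poly_computable_take_length[OF \<open>poly_computable f\<close>]]
      \<open>poly_computable_pred b\<close> unfolding poly_computable_pred_def by blast
  moreover have "\<forall>\<^sub>F n in sequentially. advantage ?g n (nd_accepts (D n)) < 1 / poly p (real n)"
    if "poly_size_nd_family D" and "pos_poly p" for D p
  proof (rule ccontr)
    assume "\<not> ?thesis"
    then have large: "\<exists>\<^sub>F n in sequentially. advantage ?g n (nd_accepts (D n)) \<ge> 1 / poly p (real n)"
      unfolding not_eventually by (simp add: not_less)
    define A where "A c n = apfst (rewire (prefix_wiring n (m n) c)) (D n)" for c n
    have family: "poly_size_nd_family (A c)" for c
      unfolding A_def by (rule poly_size_nd_family_apfst[OF that(1), where k = 0]) simp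
    have "pos_poly (smult 2 p)"
      using \<open>pos_poly p\<close> by (simp add: pos_poly_def)
    from large have "\<exists>\<^sub>F n in sequentially. 2 * (1/2 + 1 / poly (smult 2 p) (real n))
        \<le> core_gain f b n (m n) False (\<lambda>y. nd_accepts (A False n) (y @ replicate n True))
          + core_gain f b n (m n) True (\<lambda>y. nd_accepts (A True n) (y @ replicate n True))"
      by (rule frequently_elim1)
        (simp add: A_def core_gain_sum_eq_advantage_prefix[where g = ?g] len_f \<open>\<And>n. n \<le> m n\<close>)
    then have "(\<exists>\<^sub>F n in sequentially. 1/2 + 1 / poly (smult 2 p) (real n)
          \<le> core_gain f b n (m n) False (\<lambda>y. nd_accepts (A False n) (y @ replicate n True)))
      \<or> (\<exists>\<^sub>F n in sequentially. 1/2 + 1 / poly (smult 2 p) (real n)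
          \<le> core_gain f b n (m n) True (\<lambda>y. nd_accepts (A True n) (y @ replicate n True)))"
      by (rule frequently_le_half_sum)
    with secure[OF family \<open>pos_poly (smult 2 p)\<close>] show False
      by blast
  qed
  ultimately show ?thesis
    unfolding super_bit_iff by (intro conjI allI impI) auto
qed

theorem theorem6p6:
  shows "(\<exists>f m b. (\<forall>x. length (f x) = m (length x)) \<and> (\<forall>n. n \<le> m n) \<and>
              poly_computable f \<and> super_core b f m)
         \<longleftrightarrow> (\<exists>g. super_bit g)"
proof
  assume "\<exists>f m b. (\<forall>x. length (f x) = m (length x)) \<and> (\<forall>n. n \<le> m n) \<and>
              poly_computable f \<and> super_core b f m"
  then obtain f m b where "\<And>x. length (f x) = m (length x)" "\<And>n. n \<le> m n"
    and "poly_computable f" "super_core b f m"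
    by blast
  then show "\<exists>g. super_bit g"
    by (blast intro: super_bit_of_super_core)
next
  assume "\<exists>g. super_bit g"
  then obtain g where g: "super_bit g" ..
  then have "length (butlast (g x)) = length x" and "poly_computable g" for x
    unfolding super_bit_def by auto
  with super_core_of_super_bit[OF g] show "\<exists>f m b. (\<forall>x. length (f x) = m (length x)) \<and> (\<forall>n. n \<le> m n) \<and>
              poly_computable f \<and> super_core b f m"
    by (intro exI[of _ "\<lambda>x. butlast (g x)"] exI[of _ "\<lambda>n. n"] exI[of _ "\<lambda>x. last (g x)"])
      (simp add: poly_computable_butlast)
qed

end
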